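(* Let $P(X)$ be a complex polynomial of degree $n \geq 2$ and $U(X)$ a quadratic polynomial with non-zero discriminant such that \[ U(X)P''(X) - (n-1)U'(X)P'(X) + \frac{n(n-1)}{2}U''(X)P(X) = 0. \] Set $Y_{1}(X) = 2U(X)P'(X) - nU'(X)P(X)$, $h = \frac{n^{2}-1}{4}\left(U'(X)^{2} - 2U(X)U''(X)\right)$ (a constant) and $\lambda = h/(n^{2}-1)$. Define polynomials $A_{r}(X), B_{r}(X)$ by \[ A_{0} = \tfrac{2h}{3},\quad A_{1} = \tfrac{2(n+1)}{3}\left(UP' - \tfrac{n-1}{2}U'P\right),\quad B_{0} = \tfrac{2hX}{3},\quad B_{1} = XA_{1} - \tfrac{2(n+1)UP}{3}, \] and for $r \geq 1$ \[ \lambda(n(r+1)-1)A_{r+1} = \left(r+\tfrac12\right)Y_{1}A_{r} - (nr+1)P^{2}A_{r-1}, \] \[ \lambda(n(r+1)-1)B_{r+1} = \left(r+\tfrac12\right)Y_{1}B_{r} - (nr+1)P^{2}B_{r-1}. \] Let $a,b,c,d$ be complex numbers with $ad-bc \neq 0$, and define $K_{r}(X) = aA_{r}(X) + bB_{r}(X)$ and $L_{r}(X) = cA_{r}(X) + dB_{r}(X)$. If $x$ is such that $U(x)P(x) \neq 0$, then \[ K_{r+1}(x)L_{r}(x) \neq K_{r}(x)L_{r+1}(x) \] for all $r \geq 0$. *)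

theory Defs
  imports "HOL-Computational_Algebra.Polynomial"
begin

definition quad_discr :: "complex poly \<Rightarrow> complex" where
  "quad_discr U = (coeff U 1)^2 - 4 * coeff U 2 * coeff U 0"

text \<open>n = degree P throughout.\<close>
definition Y1 :: "complex poly \<Rightarrow> complex poly \<Rightarrow> complex poly" where
  "Y1 P U = smult 2 (U * pderiv P) - smult (of_nat (degree P)) (pderiv U * P)"

text \<open>The polynomial h; under the hypotheses it is a constant.\<close>
definition h_poly :: "complex poly \<Rightarrow> complex poly \<Rightarrow> complex poly" where
  "h_poly P U = smult (((of_nat (degree P))^2 - 1) / 4)
      ((pderiv U)^2 - smult 2 (U * pderiv (pderiv U)))"

definition hval :: "complex poly \<Rightarrow> complex poly \<Rightarrow> complex" where
  "hval P U = coeff (h_poly P U) 0"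

definition lam :: "complex poly \<Rightarrow> complex poly \<Rightarrow> complex" where
  "lam P U = hval P U / ((of_nat (degree P))^2 - 1)"

text \<open>Written with index r+1 = Suc (Suc k), i.e. r = k+1.\<close>
fun ABpoly :: "complex poly \<Rightarrow> complex poly \<Rightarrow> complex poly \<Rightarrow> complex poly \<Rightarrow> nat \<Rightarrow> complex poly" where
  "ABpoly P U S0 S1 0 = S0"
| "ABpoly P U S0 S1 (Suc 0) = S1"
| "ABpoly P U S0 S1 (Suc (Suc k)) =
     smult (1 / (lam P U * (of_nat (degree P * (k + 2)) - 1)))
       (smult (of_nat (k + 1) + 1/2) (Y1 P U * ABpoly P U S0 S1 (Suc k))
        - smult (of_nat (degree P * (k + 1) + 1)) (P^2 * ABpoly P U S0 S1 k))"

definition A1 :: "complex poly \<Rightarrow> complex poly \<Rightarrow> complex poly" where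
  "A1 P U = smult (2 * (of_nat (degree P) + 1) / 3)
      (U * pderiv P - smult ((of_nat (degree P) - 1) / 2) (pderiv U * P))"

definition Apoly :: "complex poly \<Rightarrow> complex poly \<Rightarrow> nat \<Rightarrow> complex poly" where
  "Apoly P U = ABpoly P U [:2 * hval P U / 3:] (A1 P U)"

definition Bpoly :: "complex poly \<Rightarrow> complex poly \<Rightarrow> nat \<Rightarrow> complex poly" where
  "Bpoly P U = ABpoly P U [:0, 2 * hval P U / 3:]
      ([:0, 1:] * A1 P U - smult (2 * (of_nat (degree P) + 1) / 3) (U * P))"

end

theory Submission
  imports Defs
begin

text \<open>The Casoratian W r = A (r+1) B r - A r B (r+1) of the two solutions of the three-term
  recursion obeys a first-order recursion in which the Y1 terms cancel:
  lam (n(r+2) - 1) W (r+1) = (n(r+1) + 1) P^2 W r. So W r (x) is a nonzero multiple of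
  W 0 (x) = (4 h (n+1) / 9) U(x) P(x), where h = (n^2-1)/4 times the discriminant of U is
  nonzero; and the Casoratian of K, L is (ad - bc) W r.\<close>

definition casoratian :: "(nat \<Rightarrow> 'a::comm_ring poly) \<Rightarrow> (nat \<Rightarrow> 'a poly) \<Rightarrow> 'a \<Rightarrow> nat \<Rightarrow> 'a" where
  "casoratian F G x k = poly (F (Suc k)) x * poly (G k) x - poly (F k) x * poly (G (Suc k)) x"

lemma casoratian_linear_combination:
  "casoratian (\<lambda>k. smult a (F k) + smult b (G k)) (\<lambda>k. smult c (F k) + smult d (G k)) x k
     = (a * d - b * c) * casoratian F G x k"
  unfolding casoratian_def by (simp add: algebra_simps)

lemma hval_eq: "hval P U = ((of_nat (degree P))\<^sup>2 - 1) / 4 * quad_discr U"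
  unfolding hval_def h_poly_def quad_discr_def
  by (simp add: power2_eq_square coeff_mult_0 coeff_pderiv eval_nat_numeral field_simps)

lemma lam_nonzero:
  assumes "degree P \<ge> 2" and "quad_discr U \<noteq> 0"
  shows "lam P U \<noteq> 0"
proof -
  have "degree P ^ 2 \<noteq> 1"
    using assms(1) by simp
  then have "(of_nat (degree P) :: complex)\<^sup>2 \<noteq> 1"
    by (metis of_nat_1 of_nat_eq_iff of_nat_power)
  then show ?thesis
    using assms(2) by (simp add: lam_def hval_eq)
qed

lemma poly_ABpoly_Suc_Suc:
  "poly (ABpoly P U S0 S1 (Suc (Suc k))) x =
     1 / (lam P U * (of_nat (degree P * (k + 2)) - 1)) *
     ((of_nat (k + 1) + 1/2) * poly (Y1 P U) x * poly (ABpoly P U S0 S1 (Suc k)) x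
      - of_nat (degree P * (k + 1) + 1) * (poly P x)\<^sup>2 * poly (ABpoly P U S0 S1 k) x)"
  by (simp add: algebra_simps)

lemma three_term_casoratian_step:
  fixes g \<alpha> \<beta> y q s0 s1 t0 t1 :: "'a::comm_ring"
  shows "g * (\<alpha> * y * s1 - \<beta> * q * s0) * t1 - s1 * (g * (\<alpha> * y * t1 - \<beta> * q * t0))
           = g * \<beta> * q * (s1 * t0 - s0 * t1)"
  by (simp add: algebra_simps)

lemma casoratian_ABpoly_Suc:
  "casoratian (ABpoly P U S0 S1) (ABpoly P U T0 T1) x (Suc k)
     = 1 / (lam P U * (of_nat (degree P * (k + 2)) - 1)) * of_nat (degree P * (k + 1) + 1)
       * (poly P x)\<^sup>2 * casoratian (ABpoly P U S0 S1) (ABpoly P U T0 T1) x k"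
  unfolding casoratian_def poly_ABpoly_Suc_Suc by (rule three_term_casoratian_step)

lemma casoratian_ABpoly_nonzero:
  assumes "degree P \<ge> 2" and "lam P U \<noteq> 0" and "poly P x \<noteq> 0"
    and "casoratian (ABpoly P U S0 S1) (ABpoly P U T0 T1) x 0 \<noteq> 0"
  shows "casoratian (ABpoly P U S0 S1) (ABpoly P U T0 T1) x k \<noteq> 0"
proof (induction k)
  case 0
  then show ?case using assms(4) .
next
  case (Suc k)
  have "degree P * (k + 2) \<noteq> 1"
    using assms(1) by simp
  then have "(of_nat (degree P * (k + 2)) :: complex) - 1 \<noteq> 0"
    by (metis eq_iff_diff_eq_0 of_nat_1 of_nat_eq_iff)
  moreover have "(of_nat (degree P * (k + 1) + 1) :: complex) \<noteq> 0"
    by (metis of_nat_eq_0_iff add_eq_0_iff_both_eq_0 zero_neq_one)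
  ultimately show ?case
    using Suc assms(2,3) by (simp add: casoratian_ABpoly_Suc)
qed

lemma casoratian_Apoly_Bpoly_0:
  "casoratian (Apoly P U) (Bpoly P U) x 0
     = 2 * hval P U / 3 * (2 * (of_nat (degree P) + 1) / 3) * poly U x * poly P x"
  unfolding casoratian_def Apoly_def Bpoly_def by (simp add: algebra_simps)

theorem lemma2p7:
  fixes P U :: "complex poly" and a b c d x :: complex and r :: nat
  assumes "degree P \<ge> 2"
    and "degree U = 2"
    and "quad_discr U \<noteq> 0"
    and "U * pderiv (pderiv P) - smult (of_nat (degree P - 1)) (pderiv U * pderiv P)
         + smult (of_nat (degree P) * (of_nat (degree P) - 1) / 2) (pderiv (pderiv U) * P) = 0"
    and "a * d - b * c \<noteq> 0"
    and "poly U x * poly P x \<noteq> 0"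
  shows "poly (smult a (Apoly P U (Suc r)) + smult b (Bpoly P U (Suc r))) x
           * poly (smult c (Apoly P U r) + smult d (Bpoly P U r)) x
         \<noteq> poly (smult a (Apoly P U r) + smult b (Bpoly P U r)) x
           * poly (smult c (Apoly P U (Suc r)) + smult d (Bpoly P U (Suc r))) x"
proof -
  have lam: "lam P U \<noteq> 0"
    using assms(1,3) by (rule lam_nonzero)
  then have "hval P U \<noteq> 0"
    by (auto simp: lam_def)
  moreover have "(of_nat (2 * degree P + 2) :: complex) \<noteq> 0"
    by (simp only: of_nat_eq_0_iff)
  ultimately have "casoratian (Apoly P U) (Bpoly P U) x 0 \<noteq> 0"
    using assms(6) by (simp add: casoratian_Apoly_Bpoly_0 add.commute)
  then have "casoratian (Apoly P U) (Bpoly P U) x r \<noteq> 0"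
    using casoratian_ABpoly_nonzero[OF assms(1) lam] assms(6) by (simp add: Apoly_def Bpoly_def)
  then have "casoratian (\<lambda>k. smult a (Apoly P U k) + smult b (Bpoly P U k))
      (\<lambda>k. smult c (Apoly P U k) + smult d (Bpoly P U k)) x r \<noteq> 0"
    using assms(5) by (simp add: casoratian_linear_combination)
  then show ?thesis
    by (simp add: casoratian_def)
qed

end
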